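(* Let $X$ be an arbitrary stationary process and $Z$ an admissible channel with respect to $Z^\star$. Then \[ I(X;Z(X))=I(X;Z^\star(X))=\lim_{n\to\infty}\frac{I(X_1^n;Z^\star(X_1^n))}{n}, \] the limit on the right-hand side exists, and $\mathsf{SCap}(Z)=\mathsf{SCap}(Z^\star)$.
   Context: A channel $Z$ with finite input alphabet assigns to each finite input string $x$ a random output $Z(x)$ in a discrete set; applying a channel to several inputs means independent applications. For a process $X=(X_i)_{i\in\mathbb N}$, $X_m^n=(X_m,\dots,X_n)$; $A\to B\to C$ denotes a Markov chain; logs base 2. $X$ is stationary if $(X_1,\dots,X_n)\sim(X_{1+s},\dots,X_{n+s})$ for all $n,s$; stationary ergodic if moreover $\mathbb E[f(X_1)]=\lim_n\frac1n\sum_{j\le n}f(X_j)$ a.s. for all $f\in L^1$. Information rate $I(X;Z(X))=\liminf_n I(X_1^n;Z(X_1^n))/n$; $\mathsf{SCap}(Z)=\sup_X I(X;Z(X))$ over stationary ergodic processes $X$. $Z$ is admissible with respect to $Z^\star$ (same input alphabet) if: (1) there is $c>0$ with $H(Z^\star(X_1^n))\le cn$ for every process $X$ and $n\ge1$; (2) $I(X;Z(X))=I(X;Z^\star(X))$ for every process $X$; (3) for every $X$ and $1\le m\le n$: $X_1^n\to Z^\star(X_1^m),Z^\star(X_{m+1}^n)\to Z^\star(X_1^n)$; (4a) for every integer $\tau\ge1$ there is a non-decreasing $\gamma_m=o(m)$ with $\sum_m\gamma_m/m^2<\infty$ such that for every $X$ and $n\ge\tau$ there are $W_{\mathrm{pre}},W_{\mathrm{suf}}$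 with $X_1^n\to Z^\star(X_1^n),W_{\mathrm{pre}}\to Z^\star(X_1^\tau),Z^\star(X_{\tau+1}^n)$, $X_1^n\to Z^\star(X_1^n),W_{\mathrm{suf}}\to Z^\star(X_1^{n-\tau}),Z^\star(X_{n-\tau+1}^n)$, $H(W_{\mathrm{pre}}),H(W_{\mathrm{suf}})\le\gamma_n$; (4b) there is $\alpha_m=o(m)$ such that for every $X$, $b$, $t$ there is $W$ with $X_1^{tb}\to Z^\star(X_1^{tb}),W\to Z^\star(X_1^b),\dots,Z^\star(X_{(t-1)b+1}^{tb})$ and $H(W)\le t\alpha_b$; (5) there is $\beta_m=o(m)$ such that for every $X$, $b$, $t$ there are $Y$ with $X_1^{tb}\to Z^\star(X_1^b),\dots,Z^\star(X_{(t-1)b+1}^{tb})\to Y$ and a deterministic $\phi$ with $Z^\star(X_1^{tb})=\phi(Z^\star(X_1^b),\dots,Z^\star(X_{(t-1)b+1}^{tb}),Y)$ and $\max_z\log|\phi^{-1}(z)|\le t\beta_b$. *)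

theory Defs
  imports "HOL-Probability.Probability" "HOL-Library.Landau_Symbols"
begin

text \<open>A process X = (X_1, X_2, ...) over the alphabet 'a is identified with its law P,
  a probability measure on sequences (nat => 'a) with the product sigma-algebra.
  The coordinate omega i of omega corresponds to X_(i+1) (0-based indexing).\<close>

definition is_process :: "(nat \<Rightarrow> 'a) measure \<Rightarrow> bool" where
  "is_process P \<longleftrightarrow> prob_space P \<and>
     sets P = sets (PiM UNIV (\<lambda>_. count_space (UNIV :: 'a set)))"

definition block_law :: "(nat \<Rightarrow> 'a) measure \<Rightarrow> nat \<Rightarrow> nat \<Rightarrow> 'a list measure" where
  "block_law P s n = distr P (count_space UNIV) (\<lambda>\<omega>. map (\<lambda>i. \<omega> (s + i)) [0..<n])"

definition stationary :: "(nat \<Rightarrow> 'a) measure \<Rightarrow> bool" where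
  "stationary P \<longleftrightarrow> (\<forall>n s. block_law P s n = block_law P 0 n)"

definition ergodic :: "(nat \<Rightarrow> 'a) measure \<Rightarrow> bool" where
  "ergodic P \<longleftrightarrow> stationary P \<and>
     (\<forall>f :: 'a \<Rightarrow> real. AE \<omega> in P.
        (\<lambda>n. (\<Sum>j<n. f (\<omega> j)) / real n) \<longlonglongrightarrow> (\<integral>\<omega>. f (\<omega> 0) \<partial>P))"

text \<open>Law of X_1^n as a pmf on strings (supported on strings of length n).\<close>
definition xpre :: "(nat \<Rightarrow> 'a) measure \<Rightarrow> nat \<Rightarrow> 'a list pmf" where
  "xpre P n = embed_pmf (\<lambda>xs. measure P {\<omega> \<in> space P. map \<omega> [0..<n] = xs})"

definition entropy_pmf :: "'x pmf \<Rightarrow> ennreal" where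
  "entropy_pmf p = (\<integral>\<^sup>+ y. ennreal (- pmf p y * log 2 (pmf p y)) \<partial>count_space UNIV)"

definition mutual_info_pmf :: "('x \<times> 'y) pmf \<Rightarrow> real" where
  "mutual_info_pmf q = infsum (\<lambda>(x, y). pmf q (x, y) *
      log 2 (pmf q (x, y) / (pmf (map_pmf fst q) x * pmf (map_pmf snd q) y))) UNIV"

definition markov :: "'o pmf \<Rightarrow> ('o \<Rightarrow> 'u) \<Rightarrow> ('o \<Rightarrow> 'v) \<Rightarrow> ('o \<Rightarrow> 'w) \<Rightarrow> bool" where
  "markov q A B C \<longleftrightarrow> (\<forall>a b c.
     measure_pmf.prob q {e. A e = a \<and> B e = b \<and> C e = c} * measure_pmf.prob q {e. B e = b}
     = measure_pmf.prob q {e. A e = a \<and> B e = b} * measure_pmf.prob q {e. B e = b \<and> C e = c})"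

text \<open>A channel with input alphabet 'a and discrete output set 'b maps each finite input
  string to the law of the random output.  Several applications are independent.\<close>

fun pmf_list :: "'b pmf list \<Rightarrow> 'b list pmf" where
  "pmf_list [] = return_pmf []"
| "pmf_list (p # ps) = bind_pmf p (\<lambda>z. map_pmf (\<lambda>zs. z # zs) (pmf_list ps))"

text \<open>blk x (i,j) is the substring x_(i+1) ... x_j (1-based), i.e. X_(i+1)^j.\<close>
definition blk :: "'a list \<Rightarrow> nat \<times> nat \<Rightarrow> 'a list" where
  "blk x ij = take (snd ij - fst ij) (drop (fst ij) x)"

definition chan_joint :: "('a list \<Rightarrow> 'c pmf) \<Rightarrow> 'a list pmf \<Rightarrow> (nat \<times> nat) list
     \<Rightarrow> ('a list \<times> 'c list) pmf" where
  "chan_joint Z \<mu> bs = bind_pmf \<mu> (\<lambda>x. map_pmf (\<lambda>zs. (x, zs)) (pmf_list (map (\<lambda>ij. Z (blk x ij)) bs)))"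

definition io_joint :: "('a list \<Rightarrow> 'b pmf) \<Rightarrow> 'a list pmf \<Rightarrow> ('a list \<times> 'b) pmf" where
  "io_joint Z \<mu> = bind_pmf \<mu> (\<lambda>x. map_pmf (\<lambda>z. (x, z)) (Z x))"

definition mi_n :: "('a list \<Rightarrow> 'b pmf) \<Rightarrow> (nat \<Rightarrow> 'a) measure \<Rightarrow> nat \<Rightarrow> real" where
  "mi_n Z P n = mutual_info_pmf (io_joint Z (xpre P n))"

definition info_rate :: "('a list \<Rightarrow> 'b pmf) \<Rightarrow> (nat \<Rightarrow> 'a) measure \<Rightarrow> ereal" where
  "info_rate Z P = liminf (\<lambda>n. ereal (mi_n Z P n / real n))"

definition SCap :: "('a list \<Rightarrow> 'b pmf) \<Rightarrow> ereal" where
  "SCap Z = (SUP P \<in> {P. is_process P \<and> ergodic P}. info_rate Z P)"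

definition blocks :: "nat \<Rightarrow> nat \<Rightarrow> (nat \<times> nat) list" where
  "blocks b t = map (\<lambda>k. (k * b, (k + 1) * b)) [0..<t]"

text \<open>Auxiliary random variables W, Y are discrete; they are given values in nat
  (every discrete random variable has countable support, so this is w.l.o.g.).\<close>

definition admissible :: "('a list \<Rightarrow> 'b pmf) \<Rightarrow> ('a list \<Rightarrow> 'c pmf) \<Rightarrow> bool" where
  "admissible Z Zs \<longleftrightarrow>
     \<comment> \<open>(1)\<close>
     (\<exists>c>0. \<forall>P. is_process P \<longrightarrow> (\<forall>n\<ge>1.
        entropy_pmf (bind_pmf (xpre P n) Zs) \<le> ennreal (c * real n)))
   \<and> \<comment> \<open>(2)\<close>
     (\<forall>P. is_process P \<longrightarrow> info_rate Z P = info_rate Zs P)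
   \<and> \<comment> \<open>(3)\<close>
     (\<forall>P. is_process P \<longrightarrow> (\<forall>m n. 1 \<le> m \<and> m \<le> n \<longrightarrow>
        markov (chan_joint Zs (xpre P n) [(0, m), (m, n), (0, n)])
          fst (\<lambda>(x, zs). (zs ! 0, zs ! 1)) (\<lambda>(x, zs). zs ! 2)))
   \<and> \<comment> \<open>(4a)\<close>
     (\<forall>\<tau>::nat. \<tau> \<ge> 1 \<longrightarrow> (\<exists>\<gamma> :: nat \<Rightarrow> real.
        mono \<gamma> \<and> \<gamma> \<in> o(\<lambda>m. real m) \<and> summable (\<lambda>m. \<gamma> m / (real m)\<^sup>2) \<and>
        (\<forall>P. is_process P \<longrightarrow> (\<forall>n\<ge>\<tau>.
           (\<exists>\<nu> :: ('a list \<times> 'c list \<times> nat) pmf.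
              map_pmf (\<lambda>(x, zs, w). (x, zs)) \<nu> = chan_joint Zs (xpre P n) [(0, n), (0, \<tau>), (\<tau>, n)]
            \<and> markov \<nu> fst (\<lambda>(x, zs, w). (zs ! 0, w)) (\<lambda>(x, zs, w). (zs ! 1, zs ! 2))
            \<and> entropy_pmf (map_pmf (\<lambda>(x, zs, w). w) \<nu>) \<le> ennreal (\<gamma> n))
         \<and> (\<exists>\<nu> :: ('a list \<times> 'c list \<times> nat) pmf.
              map_pmf (\<lambda>(x, zs, w). (x, zs)) \<nu>
                = chan_joint Zs (xpre P n) [(0, n), (0, n - \<tau>), (n - \<tau>, n)]
            \<and> markov \<nu> fst (\<lambda>(x, zs, w). (zs ! 0, w)) (\<lambda>(x, zs, w). (zs ! 1, zs ! 2))
            \<and> entropy_pmf (map_pmf (\<lambda>(x, zs, w). w) \<nu>) \<le> ennreal (\<gamma> n))))))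
   \<and> \<comment> \<open>(4b)\<close>
     (\<exists>\<alpha> :: nat \<Rightarrow> real. \<alpha> \<in> o(\<lambda>m. real m) \<and>
        (\<forall>P. is_process P \<longrightarrow> (\<forall>b t. b \<ge> 1 \<and> t \<ge> 1 \<longrightarrow>
           (\<exists>\<nu> :: ('a list \<times> 'c list \<times> nat) pmf.
              map_pmf (\<lambda>(x, zs, w). (x, zs)) \<nu>
                = chan_joint Zs (xpre P (t * b)) ((0, t * b) # blocks b t)
            \<and> markov \<nu> fst (\<lambda>(x, zs, w). (hd zs, w)) (\<lambda>(x, zs, w). tl zs)
            \<and> entropy_pmf (map_pmf (\<lambda>(x, zs, w). w) \<nu>) \<le> ennreal (real t * \<alpha> b)))))
   \<and> \<comment> \<open>(5)\<close>
     (\<exists>\<beta> :: nat \<Rightarrow> real. \<beta> \<in> o(\<lambda>m. real m) \<and>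
        (\<forall>P. is_process P \<longrightarrow> (\<forall>b t. b \<ge> 1 \<and> t \<ge> 1 \<longrightarrow>
           (\<exists>(\<nu> :: ('a list \<times> 'c list \<times> nat) pmf) (\<phi> :: 'c list \<Rightarrow> nat \<Rightarrow> 'c).
              map_pmf (\<lambda>(x, zs, y). (x, zs)) \<nu>
                = chan_joint Zs (xpre P (t * b)) (blocks b t @ [(0, t * b)])
            \<and> markov \<nu> fst (\<lambda>(x, zs, y). take t zs) (\<lambda>(x, zs, y). y)
            \<and> (\<forall>(x, zs, y) \<in> set_pmf \<nu>. zs ! t = \<phi> (take t zs) y)
            \<and> (\<forall>z. let S = {(u, y). (u, y) \<in> (\<lambda>(x, zs, y). (take t zs, y)) ` set_pmf \<nu>
                                   \<and> \<phi> u y = z}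
                   in finite S \<and> (S \<noteq> {} \<longrightarrow> log 2 (real (card S)) \<le> real t * \<beta> b))))))"

end

theory Submission
  imports Defs
begin

text \<open>Write I_n = I(X_1^n; Z*(X_1^n)).  By condition (3) the output on X_1^n is a garbling of
  the pair of conditionally independent outputs on X_1^m and X_(m+1)^n, so data processing and
  the subadditivity of mutual information over conditionally independent outputs give
  I_n <= I(X_1^m; Z*(X_1^m)) + I(X_(m+1)^n; Z*(X_(m+1)^n)) = I_m + I_(n-m), the last step by
  stationarity.  Condition (1) keeps every I_n finite, so by Fekete's lemma I_n / n converges
  (to its infimum), and the liminf defining the information rate is this limit.  Condition (2)
  transfers the rate, and with it SCap, from Z* to Z.\<close>

section \<open>Generalised Kullback-Leibler divergence\<close>

text \<open>The integrand a ln (a / b) - a + b of the Kullback-Leibler divergence in nats.  The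
  correction term -a + b makes it pointwise nonnegative, so divergences are nonnegative
  integrals without integrability side conditions; between two pmfs the corrections cancel.\<close>

definition gkl :: "real \<Rightarrow> real \<Rightarrow> ennreal" where
  "gkl a b = (if a = 0 then ennreal b else if b = 0 then \<top> else ennreal (a * ln (a / b) - a + b))"

lemma gkl_expr_nonneg:
  fixes a b :: real
  assumes "0 \<le> a" "0 \<le> b" "b = 0 \<Longrightarrow> a = 0"
  shows "0 \<le> a * ln (a / b) - a + b"
proof (cases "a = 0")
  case False
  with assms have a: "0 < a" and b: "0 < b" by (auto simp: less_le)
  have "ln (b / a) \<le> b / a - 1" using a b by (intro ln_le_minus_one) auto
  hence "a * ln (b / a) \<le> a * (b / a - 1)" using a by (intro mult_left_mono) auto
  moreover have "ln (b / a) = - ln (a / b)" using a b by (simp add: ln_div)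
  moreover have "a * (b / a - 1) = b - a" using a by (simp add: field_simps)
  ultimately show ?thesis by simp
qed (use assms in simp)

text \<open>The hypothesis excludes exactly the infinite case; for a = 0 the junk values
  0 / b = 0 and ln 0 = 0 make the formula read b.\<close>

lemma gkl_eq_real:
  fixes a b :: real
  assumes "0 \<le> a" "0 \<le> b" "b = 0 \<Longrightarrow> a = 0"
  shows "gkl a b = ennreal (a * ln (a / b) - a + b)"
  using assms by (auto simp: gkl_def)

lemma enn2real_gkl:
  fixes a b :: real
  assumes "0 \<le> a" "0 \<le> b" "b = 0 \<Longrightarrow> a = 0"
  shows "enn2real (gkl a b) = a * ln (a / b) - a + b"
proof -
  have "gkl a b = ennreal (a * ln (a / b) - a + b)" using assms by (rule gkl_eq_real)
  moreover have "0 \<le> a * ln (a / b) - a + b" using assms by (rule gkl_expr_nonneg)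
  ultimately show ?thesis by simp
qed

lemma gkl_mult:
  fixes a b c :: real
  assumes "0 \<le> c" "0 \<le> a" "0 \<le> b"
  shows "gkl (c * a) (c * b) = ennreal c * gkl a b"
proof (cases "c = 0 \<or> a = 0 \<or> b = 0")
  case True
  with assms show ?thesis by (auto simp: gkl_def ennreal_mult ennreal_mult_top)
next
  case False
  with assms have pos: "0 < c" "0 < a" "0 < b" by auto
  have "c * a * ln (c * a / (c * b)) - c * a + c * b = c * (a * ln (a / b) - a + b)"
    using pos by (simp add: algebra_simps)
  hence "gkl (c * a) (c * b) = ennreal (c * (a * ln (a / b) - a + b))"
    using pos by (subst gkl_eq_real) auto
  also have "\<dots> = ennreal c * gkl a b"
    using pos by (simp add: gkl_eq_real ennreal_mult gkl_expr_nonneg)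
  finally show ?thesis .
qed

lemma gkl_ge_linear:
  fixes a b t :: real
  assumes "0 \<le> a" "0 \<le> b" "gkl a b \<noteq> \<top>"
  shows "a * t - b * (exp t - 1) \<le> enn2real (gkl a b)"
proof (cases "a = 0")
  case True
  thus ?thesis using assms mult_nonneg_nonneg[of b "exp t"] by (simp add: gkl_def algebra_simps)
next
  case False
  with assms have a: "0 < a" and b: "0 < b" by (auto simp: gkl_def less_le split: if_splits)
  define s where "s = t - ln (a / b)"
  have "b * exp t = a * exp s" using a b by (simp add: s_def exp_diff)
  moreover have "a * (1 + s) \<le> a * exp s" using a by (intro mult_left_mono) auto
  ultimately have "a * t - b * (exp t - 1) \<le> a * ln (a / b) - a + b"
    by (simp add: s_def algebra_simps)
  thus ?thesis using a b by (simp add: gkl_eq_real gkl_expr_nonneg)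
qed

lemma gkl_le_cross_entropy:
  fixes k q :: real
  assumes "0 \<le> k" "k \<le> 1" "0 \<le> q" "q \<le> 1" "q = 0 \<Longrightarrow> k = 0"
  shows "gkl k q \<le> ennreal k * ennreal (- ln q) + ennreal q"
proof (cases "k = 0")
  case False
  with assms have k: "0 < k" and q: "0 < q" by (auto simp: less_le)
  have "k * ln k \<le> 0" using k assms(2) by (intro mult_nonneg_nonpos) auto
  moreover have "k * ln (k / q) = k * ln k - k * ln q" using k q by (simp add: ln_div right_diff_distrib)
  ultimately have "k * ln (k / q) - k + q \<le> k * (- ln q) + q"
    using k unfolding mult_minus_right by linarith
  hence "gkl k q \<le> ennreal (k * (- ln q) + q)"
    using k q by (simp add: gkl_eq_real ennreal_leI)
  also have "\<dots> = ennreal (k * (- ln q)) + ennreal q"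
    using k q \<open>q \<le> 1\<close> by (intro ennreal_plus mult_nonneg_nonneg) auto
  also have "ennreal (k * (- ln q)) = ennreal k * ennreal (- ln q)"
    using k q \<open>q \<le> 1\<close> by (intro ennreal_mult) auto
  finally show ?thesis .
qed (simp add: gkl_def)

lemma nn_integral_count_space_finiteD:
  fixes f :: "'i \<Rightarrow> ennreal"
  assumes fin: "(\<integral>\<^sup>+ i. f i \<partial>count_space UNIV) \<noteq> \<top>"
  shows "f i = ennreal (enn2real (f i))"
    and "integrable (count_space UNIV) (\<lambda>i. enn2real (f i))"
    and "(\<integral>i. enn2real (f i) \<partial>count_space UNIV) = enn2real (\<integral>\<^sup>+ i. f i \<partial>count_space UNIV)"
proof -
  have "f i \<noteq> \<top>" for i
  proof
    assume "f i = \<top>"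
    then show False using nn_integral_ge_point[of i UNIV f] fin by (simp add: top_unique)
  qed
  then have pt: "f i = ennreal (enn2real (f i))" for i by (simp add: ennreal_enn2real_if)
  then show "f i = ennreal (enn2real (f i))" .
  have "(\<integral>\<^sup>+ i. ennreal (enn2real (f i)) \<partial>count_space UNIV) = (\<integral>\<^sup>+ i. f i \<partial>count_space UNIV)"
    by (rule nn_integral_cong) (rule pt[symmetric])
  then show "integrable (count_space UNIV) (\<lambda>i. enn2real (f i))"
    and "(\<integral>i. enn2real (f i) \<partial>count_space UNIV) = enn2real (\<integral>\<^sup>+ i. f i \<partial>count_space UNIV)"
    using fin by (auto intro!: integrableI_nonneg simp: integral_eq_nn_integral top.not_eq_extremum)
qed

lemma log_sum_inequality_pos:
  fixes a b :: "'i \<Rightarrow> real"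
  assumes a: "\<And>i. 0 \<le> a i" and b: "\<And>i. 0 \<le> b i" and "0 < A" "0 < B"
    and A: "has_bochner_integral (count_space UNIV) a A"
    and B: "has_bochner_integral (count_space UNIV) b B"
    and fin: "(\<integral>\<^sup>+ i. gkl (a i) (b i) \<partial>count_space UNIV) \<noteq> \<top>"
  shows "gkl A B \<le> (\<integral>\<^sup>+ i. gkl (a i) (b i) \<partial>count_space UNIV)"
proof -
  note g = nn_integral_count_space_finiteD[OF fin]
  have "gkl (a i) (b i) \<noteq> \<top>" for i
    using g(1)[of i] by (metis ennreal_neq_top)
  \<comment> \<open>integrate the bound of gkl_ge_linear at its optimum t = ln (A / B)\<close>
  define t where "t = ln (A / B)"
  have "A * ln (A / B) - A + B = A * t - B * (exp t - 1)"
    using \<open>0 < A\<close> \<open>0 < B\<close> by (simp add: t_def algebra_simps)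
  also have "\<dots> = (\<integral>i. a i * t - b i * (exp t - 1) \<partial>count_space UNIV)"
    using A B by (simp add: has_bochner_integral_integral_eq integrable.intros)
  also have "\<dots> \<le> (\<integral>i. enn2real (gkl (a i) (b i)) \<partial>count_space UNIV)"
    using integrable.intros[OF A] integrable.intros[OF B]
    by (intro integral_mono g(2) gkl_ge_linear a b \<open>gkl (a _) (b _) \<noteq> \<top>\<close>) auto
  finally have "A * ln (A / B) - A + B \<le> enn2real (\<integral>\<^sup>+ i. gkl (a i) (b i) \<partial>count_space UNIV)"
    using g(3) by simp
  hence "ennreal (A * ln (A / B) - A + B) \<le> (\<integral>\<^sup>+ i. gkl (a i) (b i) \<partial>count_space UNIV)"
    using fin by (metis ennreal_enn2real ennreal_leI top.not_eq_extremum)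
  thus ?thesis using \<open>0 < A\<close> \<open>0 < B\<close> by (simp add: gkl_def)
qed

lemma log_sum_inequality:
  fixes a b :: "'i \<Rightarrow> real"
  assumes a: "\<And>i. 0 \<le> a i" and b: "\<And>i. 0 \<le> b i" and "0 \<le> A" "0 \<le> B"
    and A: "(\<integral>\<^sup>+ i. a i \<partial>count_space UNIV) = ennreal A"
    and B: "(\<integral>\<^sup>+ i. b i \<partial>count_space UNIV) = ennreal B"
  shows "gkl A B \<le> (\<integral>\<^sup>+ i. gkl (a i) (b i) \<partial>count_space UNIV)"
    (is "_ \<le> ?R")
proof -
  consider "A = 0" | "B = 0" "A \<noteq> 0" | "?R = \<top>" | "0 < A" "0 < B" "?R \<noteq> \<top>"
    using \<open>0 \<le> A\<close> \<open>0 \<le> B\<close> by force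
  then show ?thesis
  proof cases
    case 1
    hence "\<forall>i. a i = 0" using A a by (simp add: nn_integral_0_iff_AE AE_count_space)
    thus ?thesis using 1 B by (simp add: gkl_def)
  next
    case 2
    hence "\<forall>i. b i = 0" using B b by (simp add: nn_integral_0_iff_AE AE_count_space)
    moreover obtain i where "a i \<noteq> 0" using 2 A \<open>0 \<le> A\<close> by force
    ultimately have "gkl (a i) (b i) = \<top>" by (simp add: gkl_def)
    thus ?thesis using nn_integral_ge_point[of i UNIV "\<lambda>i. gkl (a i) (b i)"] by (simp add: top_unique)
  next
    case 4
    moreover have "has_bochner_integral (count_space UNIV) a A"
      using a A \<open>0 \<le> A\<close> by (intro has_bochner_integral_nn_integral) auto
    moreover have "has_bochner_integral (count_space UNIV) b B"
      using b B \<open>0 \<le> B\<close> by (intro has_bochner_integral_nn_integral) auto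
    ultimately show ?thesis using a b by (intro log_sum_inequality_pos)
  qed simp
qed

lemma nn_integral_count_space_swap:
  fixes f :: "'i \<Rightarrow> 'z \<Rightarrow> ennreal"
  shows "(\<integral>\<^sup>+ z. \<integral>\<^sup>+ i. f i z \<partial>count_space UNIV \<partial>count_space UNIV)
       = (\<integral>\<^sup>+ i. \<integral>\<^sup>+ z. f i z \<partial>count_space UNIV \<partial>count_space UNIV)"
  using nn_integral_snd_count_space[of "\<lambda>(i, z). f i z"]
    nn_integral_fst_count_space[of "\<lambda>(i, z). f i z"]
  by simp

lemma ennreal_pmf_bind_count_space:
  "ennreal (pmf (bind_pmf \<mu> K) y) = (\<integral>\<^sup>+ x. ennreal (pmf \<mu> x * pmf (K x) y) \<partial>count_space UNIV)"
  by (simp add: ennreal_pmf_bind nn_integral_measure_pmf ennreal_mult')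

lemma pmf_mult_le_pmf_bind: "pmf \<mu> x * pmf (K x) y \<le> pmf (bind_pmf \<mu> K) y"
proof -
  have "ennreal (pmf \<mu> x * pmf (K x) y) \<le> ennreal (pmf (bind_pmf \<mu> K) y)"
    unfolding ennreal_pmf_bind_count_space[of \<mu> K y]
    by (rule nn_integral_ge_point[where p="\<lambda>i. ennreal (pmf \<mu> i * pmf (K i) y)"]) simp
  thus ?thesis by (simp add: ennreal_le_iff)
qed

definition kl_pmf :: "'b pmf \<Rightarrow> 'b pmf \<Rightarrow> ennreal" where
  "kl_pmf p q = (\<integral>\<^sup>+ y. gkl (pmf p y) (pmf q y) \<partial>count_space UNIV)"

lemma kl_pmf_bind_le: "kl_pmf (bind_pmf p T) (bind_pmf q T) \<le> kl_pmf p q"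
proof -
  have "kl_pmf (bind_pmf p T) (bind_pmf q T) \<le>
     (\<integral>\<^sup>+ z. \<integral>\<^sup>+ x. gkl (pmf p x * pmf (T x) z) (pmf q x * pmf (T x) z)
       \<partial>count_space UNIV \<partial>count_space UNIV)"
    unfolding kl_pmf_def
    by (intro nn_integral_mono log_sum_inequality ennreal_pmf_bind_count_space[symmetric]) auto
  also have "\<dots> = (\<integral>\<^sup>+ z. \<integral>\<^sup>+ x. gkl (pmf p x) (pmf q x) * ennreal (pmf (T x) z)
       \<partial>count_space UNIV \<partial>count_space UNIV)"
    using gkl_mult[of "pmf (T _) _" "pmf p _" "pmf q _"]
    by (intro nn_integral_cong) (simp add: mult.commute)
  also have "\<dots> = (\<integral>\<^sup>+ x. \<integral>\<^sup>+ z. gkl (pmf p x) (pmf q x) * ennreal (pmf (T x) z)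
       \<partial>count_space UNIV \<partial>count_space UNIV)"
    by (rule nn_integral_count_space_swap)
  also have "\<dots> = kl_pmf p q"
    unfolding kl_pmf_def by (simp add: nn_integral_cmult nn_integral_pmf)
  finally show ?thesis .
qed

lemma gkl_expr_scale:
  fixes \<alpha> \<beta> k q :: real
  assumes "0 < \<alpha>" "0 < \<beta>" "0 \<le> k" "0 \<le> q" "q = 0 \<Longrightarrow> k = 0"
  shows "\<alpha> * k * ln (\<alpha> * k / (\<beta> * q)) - \<alpha> * k + \<beta> * q
       = \<alpha> * (k * ln (k / q) - k + q) + \<alpha> * ln (\<alpha> / \<beta>) * k + (\<beta> - \<alpha>) * q"
proof (cases "k = 0")
  case False
  with assms have "0 < k" "0 < q" by (auto simp: less_le)
  with assms have "ln (\<alpha> * k / (\<beta> * q)) = ln (\<alpha> / \<beta>) + ln (k / q)"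
    by (simp add: ln_div ln_mult)
  thus ?thesis by (simp add: algebra_simps)
qed (simp add: algebra_simps)

lemma nn_integral_gkl_scale_eq:
  fixes \<alpha> \<beta> :: real
  assumes \<alpha>: "0 < \<alpha>" and \<beta>: "0 < \<beta>" and fin: "kl_pmf k q \<noteq> \<top>"
  shows "(\<integral>\<^sup>+ y. gkl (\<alpha> * pmf k y) (\<beta> * pmf q y) \<partial>count_space UNIV) = gkl \<alpha> \<beta> + ennreal \<alpha> * kl_pmf k q"
proof -
  note D = nn_integral_count_space_finiteD[OF fin[unfolded kl_pmf_def]]
  have supp: "pmf q y = 0 \<Longrightarrow> pmf k y = 0" for y
    using D(1)[of y] by (auto simp: gkl_def split: if_splits)
  define h where "h y = \<alpha> * enn2real (gkl (pmf k y) (pmf q y)) + \<alpha> * ln (\<alpha> / \<beta>) * pmf k y + (\<beta> - \<alpha>) * pmf q y"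
    for y
  have args: "0 \<le> \<alpha> * pmf k y" "0 \<le> \<beta> * pmf q y" "\<beta> * pmf q y = 0 \<Longrightarrow> \<alpha> * pmf k y = 0" for y
    using \<alpha> \<beta> supp[of y] by auto
  have "h y = \<alpha> * pmf k y * ln (\<alpha> * pmf k y / (\<beta> * pmf q y)) - \<alpha> * pmf k y + \<beta> * pmf q y" for y
    using \<alpha> \<beta> supp[of y] by (simp add: h_def enn2real_gkl gkl_expr_scale)
  hence gkl_h: "gkl (\<alpha> * pmf k y) (\<beta> * pmf q y) = ennreal (h y)" and h_nonneg: "0 \<le> h y" for y
    using gkl_eq_real[OF args] gkl_expr_nonneg[OF args] by auto
  have int_h: "integrable (count_space UNIV) h"
    unfolding h_def using D(2) integrable_pmf[of UNIV k] integrable_pmf[of UNIV q] by auto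
  have "(\<integral>\<^sup>+ y. gkl (\<alpha> * pmf k y) (\<beta> * pmf q y) \<partial>count_space UNIV) = ennreal (\<integral>y. h y \<partial>count_space UNIV)"
    unfolding gkl_h using nn_integral_eq_integral[OF int_h] h_nonneg by simp
  also have "(\<integral>y. h y \<partial>count_space UNIV)
      = \<alpha> * (\<integral>y. enn2real (gkl (pmf k y) (pmf q y)) \<partial>count_space UNIV)
        + \<alpha> * ln (\<alpha> / \<beta>) * (\<integral>y. pmf k y \<partial>count_space UNIV)
        + (\<beta> - \<alpha>) * (\<integral>y. pmf q y \<partial>count_space UNIV)"
    unfolding h_def using D(2) integrable_pmf[of UNIV k] integrable_pmf[of UNIV q] by simp
  also have "\<dots> = \<alpha> * enn2real (kl_pmf k q) + (\<alpha> * ln (\<alpha> / \<beta>) - \<alpha> + \<beta>)"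
    using D(3) by (simp add: integral_pmf kl_pmf_def algebra_simps)
  also have "ennreal \<dots> = ennreal (\<alpha> * enn2real (kl_pmf k q)) + ennreal (\<alpha> * ln (\<alpha> / \<beta>) - \<alpha> + \<beta>)"
    using \<alpha> \<beta> by (intro ennreal_plus gkl_expr_nonneg) auto
  also have "\<dots> = ennreal \<alpha> * kl_pmf k q + gkl \<alpha> \<beta>"
    using \<alpha> \<beta> fin by (simp add: ennreal_mult gkl_eq_real ennreal_enn2real_if)
  finally show ?thesis by (simp add: add.commute)
qed

lemma nn_integral_gkl_scale_le:
  fixes \<alpha> \<beta> :: real
  assumes "0 \<le> \<alpha>" "0 \<le> \<beta>"
  shows "(\<integral>\<^sup>+ y. gkl (\<alpha> * pmf k y) (\<beta> * pmf q y) \<partial>count_space UNIV) \<le> gkl \<alpha> \<beta> + ennreal \<alpha> * kl_pmf k q"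
proof -
  consider "\<alpha> = 0" | "\<alpha> \<noteq> 0" "\<beta> = 0 \<or> kl_pmf k q = \<top>" | "0 < \<alpha>" "0 < \<beta>" "kl_pmf k q \<noteq> \<top>"
    using assms by force
  then show ?thesis
  proof cases
    case 1
    have "(\<integral>\<^sup>+ y. gkl (\<alpha> * pmf k y) (\<beta> * pmf q y) \<partial>count_space UNIV)
        = (\<integral>\<^sup>+ y. ennreal \<beta> * ennreal (pmf q y) \<partial>count_space UNIV)"
      using 1 assms by (intro nn_integral_cong) (simp add: gkl_def ennreal_mult)
    also have "\<dots> = gkl \<alpha> \<beta>" using 1 by (simp add: nn_integral_cmult nn_integral_pmf gkl_def)
    finally show ?thesis by (simp add: add_increasing2)
  next
    case 2
    with assms show ?thesis by (auto simp: gkl_def ennreal_mult_top)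
  next
    case 3
    thus ?thesis by (simp add: nn_integral_gkl_scale_eq)
  qed
qed

lemma kl_pmf_pair_le: "kl_pmf (pair_pmf p1 p2) (pair_pmf q1 q2) \<le> kl_pmf p1 q1 + kl_pmf p2 q2"
proof -
  have "kl_pmf (pair_pmf p1 p2) (pair_pmf q1 q2) =
     (\<integral>\<^sup>+ a. \<integral>\<^sup>+ b. gkl (pmf p1 a * pmf p2 b) (pmf q1 a * pmf q2 b) \<partial>count_space UNIV \<partial>count_space UNIV)"
    unfolding kl_pmf_def nn_integral_fst_count_space[symmetric] by (simp add: pmf_pair)
  also have "\<dots> \<le> (\<integral>\<^sup>+ a. gkl (pmf p1 a) (pmf q1 a) + ennreal (pmf p1 a) * kl_pmf p2 q2 \<partial>count_space UNIV)"
    by (intro nn_integral_mono nn_integral_gkl_scale_le) auto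
  also have "\<dots> = kl_pmf p1 q1 + kl_pmf p2 q2"
    by (simp add: nn_integral_add nn_integral_multc kl_pmf_def nn_integral_pmf)
  finally show ?thesis .
qed

lemma kl_pmf_eq_infsum:
  assumes fin: "kl_pmf p q \<noteq> \<top>"
  shows "infsum (\<lambda>y. pmf p y * log 2 (pmf p y / pmf q y)) UNIV = enn2real (kl_pmf p q) / ln 2"
proof -
  note D = nn_integral_count_space_finiteD[OF fin[unfolded kl_pmf_def]]
  have supp: "pmf q y = 0 \<Longrightarrow> pmf p y = 0" for y
    using D(1)[of y] by (auto simp: gkl_def split: if_splits)
  define f where "f = (\<lambda>y. pmf p y * log 2 (pmf p y / pmf q y))"
  have f_eq: "f y = (enn2real (gkl (pmf p y) (pmf q y)) + pmf p y - pmf q y) / ln 2" for y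
    using supp[of y] by (simp add: f_def enn2real_gkl log_def field_simps)
  have int_f: "integrable (count_space UNIV) f"
    unfolding f_eq using D(2) integrable_pmf[of UNIV p] integrable_pmf[of UNIV q] by auto
  have "infsum f UNIV = infsetsum f UNIV"
    using int_f by (intro infsetsum_infsum[symmetric]) (simp add: abs_summable_on_def)
  also have "\<dots> = (\<integral>y. f y \<partial>count_space UNIV)" by (simp add: infsetsum_def)
  also have "\<dots> = ((\<integral>y. enn2real (gkl (pmf p y) (pmf q y)) \<partial>count_space UNIV)
      + (\<integral>y. pmf p y \<partial>count_space UNIV) - (\<integral>y. pmf q y \<partial>count_space UNIV)) / ln 2"
    unfolding f_eq using D(2) integrable_pmf[of UNIV p] integrable_pmf[of UNIV q] by simp
  also have "\<dots> = enn2real (kl_pmf p q) / ln 2"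
    using D(3) by (simp add: integral_pmf kl_pmf_def)
  finally show ?thesis unfolding f_def .
qed

lemma sum_mult_gkl_eq:
  fixes p k :: "'x \<Rightarrow> real"
  assumes "0 < c" "\<And>x. x \<in> S \<Longrightarrow> 0 \<le> p x" "\<And>x. 0 \<le> k x"
  shows "(\<Sum>x\<in>S. ennreal (p x) * gkl (k x) c) = ennreal (\<Sum>x\<in>S. p x * (k x * ln (k x / c) - k x + c))"
proof -
  have nonneg: "0 \<le> k x * ln (k x / c) - k x + c" for x
    using assms by (simp add: gkl_expr_nonneg)
  have "ennreal (p x) * gkl (k x) c = ennreal (p x * (k x * ln (k x / c) - k x + c))" if "x \<in> S" for x
    using assms that nonneg[of x] by (simp add: gkl_eq_real ennreal_mult)
  moreover have "0 \<le> p x * (k x * ln (k x / c) - k x + c)" if "x \<in> S" for x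
    using assms that nonneg[of x] by simp
  ultimately show ?thesis by (simp add: sum_ennreal)
qed

lemma gkl_expr_change_reference:
  fixes k Q R :: real
  assumes "0 \<le> k" "0 < Q" "0 < R"
  shows "k * ln (k / R) - k + R = (k * ln (k / Q) - k + Q) + k * ln (Q / R) + (R - Q)"
proof (cases "k = 0")
  case False
  with assms have "ln (k / R) = ln (k / Q) + ln (Q / R)" by (simp add: ln_div)
  thus ?thesis by (simp add: algebra_simps)
qed simp

text \<open>Moving the reference value from the mean Q to R costs exactly gkl Q R.\<close>

lemma sum_gkl_mean_le:
  fixes p k :: "'x \<Rightarrow> real"
  assumes S: "finite S" and p: "\<And>x. x \<in> S \<Longrightarrow> 0 < p x" and p_sum: "(\<Sum>x\<in>S. p x) = 1"
    and k: "\<And>x. 0 \<le> k x" and "0 \<le> R" and Q: "Q = (\<Sum>x\<in>S. p x * k x)"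
  shows "(\<Sum>x\<in>S. ennreal (p x) * gkl (k x) Q) \<le> (\<Sum>x\<in>S. ennreal (p x) * gkl (k x) R)"
proof (cases "\<forall>x\<in>S. k x = 0")
  case True
  thus ?thesis by (simp add: Q gkl_def)
next
  case False
  then obtain x0 where x0: "x0 \<in> S" "0 < k x0" using k by (auto simp: less_le)
  have "0 < p x0 * k x0" using x0 p by simp
  also have "p x0 * k x0 \<le> Q"
    unfolding Q using S x0 p k by (intro member_le_sum) (auto intro: mult_nonneg_nonneg less_imp_le)
  finally have "0 < Q" .
  show ?thesis
  proof (cases "R = 0")
    case True
    have "ennreal (p x0) * gkl (k x0) R = \<top>"
      using True x0 p[OF x0(1)] by (simp add: gkl_def ennreal_mult_top)
    moreover have "ennreal (p x0) * gkl (k x0) R \<le> (\<Sum>x\<in>S. ennreal (p x) * gkl (k x) R)"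
      using S x0 by (intro member_le_sum) auto
    ultimately show ?thesis by (simp add: top_unique)
  next
    case False
    with \<open>0 \<le> R\<close> have "0 < R" by simp
    have change: "p x * (k x * ln (k x / R) - k x + R)
        = p x * (k x * ln (k x / Q) - k x + Q) + p x * k x * ln (Q / R) + p x * (R - Q)" for x
      unfolding gkl_expr_change_reference[OF k \<open>0 < Q\<close> \<open>0 < R\<close>] by (simp add: algebra_simps)
    have "(\<Sum>x\<in>S. p x * (k x * ln (k x / R) - k x + R))
        = (\<Sum>x\<in>S. p x * (k x * ln (k x / Q) - k x + Q)) + (Q * ln (Q / R) - Q + R)"
      unfolding change sum.distrib Q using p_sum
      by (simp add: sum_distrib_right[symmetric] sum_distrib_left[symmetric])
    moreover have "0 \<le> Q * ln (Q / R) - Q + R" using \<open>0 < Q\<close> \<open>0 < R\<close> by (simp add: gkl_expr_nonneg)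
    ultimately show ?thesis
      using p k \<open>0 < Q\<close> \<open>0 < R\<close> by (simp add: sum_mult_gkl_eq less_imp_le ennreal_leI)
  qed
qed

section \<open>Mutual information of a channel\<close>

text \<open>I(X; Y) in nats, for X with law \<mu> and Y drawn from K X.\<close>

definition mi_kernel :: "'x pmf \<Rightarrow> ('x \<Rightarrow> 'y pmf) \<Rightarrow> ennreal" where
  "mi_kernel \<mu> K = (\<integral>\<^sup>+ x. kl_pmf (K x) (bind_pmf \<mu> K) \<partial>measure_pmf \<mu>)"

lemma mi_kernel_nn_integral:
  "mi_kernel \<mu> K = (\<integral>\<^sup>+ x. \<integral>\<^sup>+ y. ennreal (pmf \<mu> x) * gkl (pmf (K x) y) (pmf (bind_pmf \<mu> K) y)
     \<partial>count_space UNIV \<partial>count_space UNIV)"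
  unfolding mi_kernel_def kl_pmf_def nn_integral_measure_pmf by (simp add: nn_integral_cmult)

lemma mi_kernel_cong:
  assumes "\<And>x. x \<in> set_pmf \<mu> \<Longrightarrow> K x = K' x"
  shows "mi_kernel \<mu> K = mi_kernel \<mu> K'"
proof -
  have "bind_pmf \<mu> K = bind_pmf \<mu> K'" using assms by (intro bind_pmf_cong) auto
  thus ?thesis unfolding mi_kernel_def using assms
    by (intro nn_integral_cong_AE) (auto simp: AE_measure_pmf_iff)
qed

lemma mi_kernel_map: "mi_kernel \<mu> (\<lambda>x. K (f x)) = mi_kernel (map_pmf f \<mu>) K"
  unfolding mi_kernel_def by (simp add: bind_map_pmf)

lemma mi_kernel_bind_le:
  assumes "\<And>x. x \<in> set_pmf \<mu> \<Longrightarrow> K' x = bind_pmf (K x) T"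
  shows "mi_kernel \<mu> K' \<le> mi_kernel \<mu> K"
proof -
  have "mi_kernel \<mu> K' = mi_kernel \<mu> (\<lambda>x. bind_pmf (K x) T)" using assms by (rule mi_kernel_cong)
  also have "\<dots> = (\<integral>\<^sup>+ x. kl_pmf (bind_pmf (K x) T) (bind_pmf (bind_pmf \<mu> K) T) \<partial>measure_pmf \<mu>)"
    unfolding mi_kernel_def by (simp add: bind_assoc_pmf)
  also have "\<dots> \<le> mi_kernel \<mu> K" unfolding mi_kernel_def by (intro nn_integral_mono kl_pmf_bind_le)
  finally show ?thesis .
qed

lemma pmf_bind_finite_support:
  assumes "finite (set_pmf \<mu>)"
  shows "pmf (bind_pmf \<mu> K) y = (\<Sum>x\<in>set_pmf \<mu>. pmf \<mu> x * pmf (K x) y)"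
  unfolding pmf_bind using assms
  by (subst integral_measure_pmf_real[where A="set_pmf \<mu>"]) (auto simp: mult.commute)

lemma mi_kernel_le_kl_pmf:
  assumes fin: "finite (set_pmf \<mu>)"
  shows "mi_kernel \<mu> K \<le> (\<integral>\<^sup>+ x. kl_pmf (K x) R \<partial>measure_pmf \<mu>)"
proof -
  let ?S = "set_pmf \<mu>"
  have "mi_kernel \<mu> K = (\<Sum>x\<in>?S. kl_pmf (K x) (bind_pmf \<mu> K) * pmf \<mu> x)"
    unfolding mi_kernel_def using fin by (simp add: nn_integral_measure_pmf_finite)
  also have "\<dots> = (\<integral>\<^sup>+ y. (\<Sum>x\<in>?S. ennreal (pmf \<mu> x) * gkl (pmf (K x) y) (pmf (bind_pmf \<mu> K) y))
      \<partial>count_space UNIV)"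
    unfolding kl_pmf_def by (subst nn_integral_sum) (auto simp: nn_integral_cmult mult.commute)
  also have "\<dots> \<le> (\<integral>\<^sup>+ y. (\<Sum>x\<in>?S. ennreal (pmf \<mu> x) * gkl (pmf (K x) y) (pmf R y)) \<partial>count_space UNIV)"
    by (intro nn_integral_mono sum_gkl_mean_le fin pmf_bind_finite_support)
      (auto simp: set_pmf_iff sum_pmf_eq_1[OF fin order_refl] less_le)
  also have "\<dots> = (\<Sum>x\<in>?S. kl_pmf (K x) R * pmf \<mu> x)"
    unfolding kl_pmf_def by (subst nn_integral_sum) (auto simp: nn_integral_cmult mult.commute)
  also have "\<dots> = (\<integral>\<^sup>+ x. kl_pmf (K x) R \<partial>measure_pmf \<mu>)"
    using fin by (simp add: nn_integral_measure_pmf_finite)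
  finally show ?thesis .
qed

lemma mi_kernel_pair_le:
  assumes "finite (set_pmf \<mu>)"
  shows "mi_kernel \<mu> (\<lambda>x. pair_pmf (K1 x) (K2 x)) \<le> mi_kernel \<mu> K1 + mi_kernel \<mu> K2"
proof -
  have "mi_kernel \<mu> (\<lambda>x. pair_pmf (K1 x) (K2 x)) \<le>
     (\<integral>\<^sup>+ x. kl_pmf (pair_pmf (K1 x) (K2 x)) (pair_pmf (bind_pmf \<mu> K1) (bind_pmf \<mu> K2)) \<partial>measure_pmf \<mu>)"
    using assms by (rule mi_kernel_le_kl_pmf)
  also have "\<dots> \<le> (\<integral>\<^sup>+ x. kl_pmf (K1 x) (bind_pmf \<mu> K1) + kl_pmf (K2 x) (bind_pmf \<mu> K2) \<partial>measure_pmf \<mu>)"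
    by (intro nn_integral_mono kl_pmf_pair_le)
  also have "\<dots> = mi_kernel \<mu> K1 + mi_kernel \<mu> K2"
    unfolding mi_kernel_def by (simp add: nn_integral_add)
  finally show ?thesis .
qed

lemma pmf_mult_gkl_bind_le:
  "ennreal (pmf \<mu> x) * gkl (pmf (K x) y) (pmf (bind_pmf \<mu> K) y)
   \<le> ennreal (pmf \<mu> x * pmf (K x) y) * ennreal (- ln (pmf (bind_pmf \<mu> K) y))
     + ennreal (pmf \<mu> x) * ennreal (pmf (bind_pmf \<mu> K) y)"
proof (cases "pmf \<mu> x = 0")
  case False
  hence "0 < pmf \<mu> x" by (simp add: less_le)
  moreover have "pmf \<mu> x * pmf (K x) y \<le> pmf (bind_pmf \<mu> K) y" by (rule pmf_mult_le_pmf_bind)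
  ultimately have "pmf (bind_pmf \<mu> K) y = 0 \<Longrightarrow> pmf (K x) y = 0"
    by (metis mult_pos_pos not_le pmf_nonneg order.not_eq_order_implies_strict)
  hence "gkl (pmf (K x) y) (pmf (bind_pmf \<mu> K) y)
      \<le> ennreal (pmf (K x) y) * ennreal (- ln (pmf (bind_pmf \<mu> K) y)) + ennreal (pmf (bind_pmf \<mu> K) y)"
    by (intro gkl_le_cross_entropy) (auto intro: pmf_le_1)
  hence "ennreal (pmf \<mu> x) * gkl (pmf (K x) y) (pmf (bind_pmf \<mu> K) y)
      \<le> ennreal (pmf \<mu> x) * (ennreal (pmf (K x) y) * ennreal (- ln (pmf (bind_pmf \<mu> K) y))
         + ennreal (pmf (bind_pmf \<mu> K) y))"
    by (rule mult_left_mono) simp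
  thus ?thesis by (simp add: distrib_left ennreal_mult mult.assoc)
qed simp

lemma ennreal_mult_neg_ln:
  fixes p :: real
  assumes "0 \<le> p" "p \<le> 1"
  shows "ennreal p * ennreal (- ln p) = ennreal (ln 2) * ennreal (- p * log 2 p)"
proof -
  have "0 \<le> - ln p" using assms by (cases "p = 0") (simp_all add: less_le)
  hence "ennreal p * ennreal (- ln p) = ennreal (ln 2 * (- p * log 2 p))"
    using assms by (simp add: ennreal_mult[symmetric] log_def)
  thus ?thesis using ennreal_mult'[of "ln 2" "- p * log 2 p"] by simp
qed

lemma mi_kernel_le_entropy: "mi_kernel \<mu> K \<le> ennreal (ln 2) * entropy_pmf (bind_pmf \<mu> K) + 1"
proof -
  define Q where "Q = bind_pmf \<mu> K"
  let ?A = "\<lambda>x y. ennreal (pmf \<mu> x * pmf (K x) y) * ennreal (- ln (pmf Q y))"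
  let ?B = "\<lambda>x y. ennreal (pmf \<mu> x) * ennreal (pmf Q y)"
  have "mi_kernel \<mu> K \<le> (\<integral>\<^sup>+ x. \<integral>\<^sup>+ y. ?A x y + ?B x y \<partial>count_space UNIV \<partial>count_space UNIV)"
    unfolding mi_kernel_nn_integral Q_def by (intro nn_integral_mono pmf_mult_gkl_bind_le)
  also have "\<dots> = (\<integral>\<^sup>+ x. \<integral>\<^sup>+ y. ?A x y \<partial>count_space UNIV \<partial>count_space UNIV)
      + (\<integral>\<^sup>+ x. \<integral>\<^sup>+ y. ?B x y \<partial>count_space UNIV \<partial>count_space UNIV)"
    by (simp add: nn_integral_add)
  also have "(\<integral>\<^sup>+ x. \<integral>\<^sup>+ y. ?B x y \<partial>count_space UNIV \<partial>count_space UNIV) = 1"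
    by (simp add: nn_integral_cmult nn_integral_pmf)
  also have "(\<integral>\<^sup>+ x. \<integral>\<^sup>+ y. ?A x y \<partial>count_space UNIV \<partial>count_space UNIV)
      = (\<integral>\<^sup>+ y. \<integral>\<^sup>+ x. ?A x y \<partial>count_space UNIV \<partial>count_space UNIV)"
    by (rule nn_integral_count_space_swap[symmetric])
  also have "\<dots> = (\<integral>\<^sup>+ y. ennreal (pmf Q y) * ennreal (- ln (pmf Q y)) \<partial>count_space UNIV)"
    by (simp add: nn_integral_multc ennreal_pmf_bind_count_space[symmetric] Q_def)
  also have "\<dots> = ennreal (ln 2) * entropy_pmf Q"
    unfolding entropy_pmf_def by (simp add: ennreal_mult_neg_ln pmf_le_1 nn_integral_cmult)
  finally show ?thesis by (simp add: Q_def)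
qed

lemma pmf_io_joint: "pmf (io_joint K \<mu>) (x, z) = pmf \<mu> x * pmf (K x) z"
proof -
  have "pmf (io_joint K \<mu>) (x, z) = (\<integral>x'. pmf (map_pmf (Pair x') (K x')) (x, z) \<partial>measure_pmf \<mu>)"
    unfolding io_joint_def pmf_bind by simp
  also have "\<dots> = (\<Sum>a\<in>{x}. pmf (map_pmf (Pair a) (K a)) (x, z) * pmf \<mu> a)"
  proof (rule integral_measure_pmf_real)
    fix a assume "a \<in> set_pmf \<mu>" "pmf (map_pmf (Pair a) (K a)) (x, z) \<noteq> 0"
    hence "(x, z) \<in> set_pmf (map_pmf (Pair a) (K a))" by (metis set_pmf_iff)
    thus "a \<in> {x}" by auto
  qed simp
  also have "\<dots> = pmf \<mu> x * pmf (K x) z"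
    using pmf_map_inj'[of "Pair x" "K x" z] by (simp add: inj_on_def)
  finally show ?thesis .
qed

lemma map_fst_io_joint: "map_pmf fst (io_joint K \<mu>) = \<mu>"
  unfolding io_joint_def by (simp add: map_bind_pmf map_pmf_comp bind_return_pmf')

lemma map_snd_io_joint: "map_pmf snd (io_joint K \<mu>) = bind_pmf \<mu> K"
  unfolding io_joint_def by (simp add: map_bind_pmf map_pmf_comp)

lemma mi_kernel_eq_kl_pmf: "mi_kernel \<mu> K = kl_pmf (io_joint K \<mu>) (pair_pmf \<mu> (bind_pmf \<mu> K))"
proof -
  have "mi_kernel \<mu> K = (\<integral>\<^sup>+ x. \<integral>\<^sup>+ y. gkl (pmf \<mu> x * pmf (K x) y) (pmf \<mu> x * pmf (bind_pmf \<mu> K) y)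
     \<partial>count_space UNIV \<partial>count_space UNIV)"
    unfolding mi_kernel_nn_integral by (simp add: gkl_mult)
  also have "\<dots> = kl_pmf (io_joint K \<mu>) (pair_pmf \<mu> (bind_pmf \<mu> K))"
    unfolding kl_pmf_def nn_integral_fst_count_space[symmetric] by (simp add: pmf_io_joint pmf_pair)
  finally show ?thesis .
qed

lemma mutual_info_pmf_io_joint:
  assumes "mi_kernel \<mu> K \<noteq> \<top>"
  shows "mutual_info_pmf (io_joint K \<mu>) = enn2real (mi_kernel \<mu> K) / ln 2"
proof -
  let ?q = "io_joint K \<mu>" and ?r = "pair_pmf \<mu> (bind_pmf \<mu> K)"
  have "pmf ?r p = pmf \<mu> (fst p) * pmf (bind_pmf \<mu> K) (snd p)" for p
    by (cases p) (simp add: pmf_pair)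
  hence "mutual_info_pmf ?q = infsum (\<lambda>p. pmf ?q p * log 2 (pmf ?q p / pmf ?r p)) UNIV"
    unfolding mutual_info_pmf_def map_fst_io_joint map_snd_io_joint by (simp add: case_prod_unfold)
  also have "\<dots> = enn2real (mi_kernel \<mu> K) / ln 2"
    using assms unfolding mi_kernel_eq_kl_pmf by (rule kl_pmf_eq_infsum)
  finally show ?thesis .
qed

lemma measure_pmf_eq_pmf_map: "measure_pmf.prob r {e. f e = v} = pmf (map_pmf f r) v"
  by (simp add: pmf_map vimage_def)

lemma markov_io_joint_eq:
  assumes "markov (io_joint (\<lambda>x. pair_pmf (K12 x) (K3 x)) \<mu>) fst (\<lambda>e. fst (snd e)) (\<lambda>e. snd (snd e))"
  shows "pmf \<mu> x * pmf (K12 x) b * pmf (K3 x) c * pmf (bind_pmf \<mu> K12) b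
       = pmf \<mu> x * pmf (K12 x) b * pmf (bind_pmf \<mu> (\<lambda>x. pair_pmf (K12 x) (K3 x))) (b, c)"
proof -
  let ?r = "io_joint (\<lambda>x. pair_pmf (K12 x) (K3 x)) \<mu>"
  have "map_pmf (\<lambda>e. (fst e, fst (snd e))) ?r = io_joint K12 \<mu>"
    unfolding io_joint_def
    by (simp add: map_bind_pmf map_pmf_comp map_fst_pair_pmf flip: map_pmf_comp[of _ fst])
  hence xb: "measure_pmf.prob ?r {e. fst e = x \<and> fst (snd e) = b} = pmf \<mu> x * pmf (K12 x) b"
    using measure_pmf_eq_pmf_map[where r="?r" and f="\<lambda>e. (fst e, fst (snd e))" and v="(x, b)"]
    by (simp add: pmf_io_joint)
  have "map_pmf (\<lambda>e. fst (snd e)) ?r = bind_pmf \<mu> K12"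
    by (simp add: map_pmf_comp[symmetric] map_snd_io_joint map_bind_pmf map_fst_pair_pmf)
  hence b: "measure_pmf.prob ?r {e. fst (snd e) = b} = pmf (bind_pmf \<mu> K12) b"
    using measure_pmf_eq_pmf_map[where r="?r" and f="\<lambda>e. fst (snd e)" and v=b] by simp
  have bc: "measure_pmf.prob ?r {e. fst (snd e) = b \<and> snd (snd e) = c}
      = pmf (bind_pmf \<mu> (\<lambda>x. pair_pmf (K12 x) (K3 x))) (b, c)"
    using measure_pmf_eq_pmf_map[where r="?r" and f=snd and v="(b, c)"]
    by (simp add: map_snd_io_joint prod_eq_iff)
  have "{e. fst e = x \<and> fst (snd e) = b \<and> snd (snd e) = c} = {(x, (b, c))}"
    by auto
  hence xbc: "measure_pmf.prob ?r {e. fst e = x \<and> fst (snd e) = b \<and> snd (snd e) = c}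
      = pmf \<mu> x * (pmf (K12 x) b * pmf (K3 x) c)"
    by (simp add: measure_pmf_single pmf_io_joint pmf_pair)
  have "pmf \<mu> x * (pmf (K12 x) b * pmf (K3 x) c) * pmf (bind_pmf \<mu> K12) b
      = pmf \<mu> x * pmf (K12 x) b * pmf (bind_pmf \<mu> (\<lambda>x. pair_pmf (K12 x) (K3 x))) (b, c)"
    using assms[unfolded markov_def, rule_format, of x b c] unfolding xbc xb b bc .
  thus ?thesis by (simp add: mult.assoc)
qed

text \<open>Conditional law of the second component given the first; junk when the condition has
  probability zero.\<close>

definition cond_snd :: "('b \<times> 'c) pmf \<Rightarrow> 'b \<Rightarrow> 'c pmf" where
  "cond_snd R b = embed_pmf (\<lambda>c. pmf R (b, c) / pmf (map_pmf fst R) b)"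

lemma pmf_cond_snd:
  assumes "0 < pmf (map_pmf fst R) b"
  shows "pmf (cond_snd R b) c = pmf R (b, c) / pmf (map_pmf fst R) b"
proof -
  have "(\<integral>\<^sup>+ c. ennreal (pmf R (b, c)) \<partial>count_space UNIV) = emeasure R (Pair b ` UNIV)"
    by (rule nn_integral_pmf') (simp add: inj_on_def)
  also have "Pair b ` UNIV = fst -` {b}" by auto
  also have "emeasure R (fst -` {b}) = ennreal (pmf (map_pmf fst R) b)"
    using emeasure_map_pmf[of fst R "{b}"] by (simp add: emeasure_pmf_single)
  finally have "(\<integral>\<^sup>+ c. ennreal (pmf R (b, c) / pmf (map_pmf fst R) b) \<partial>count_space UNIV) = 1"
    using assms by (simp add: divide_ennreal[symmetric] nn_integral_divide ennreal_divide_self)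
  thus ?thesis unfolding cond_snd_def by (subst pmf_embed_pmf) auto
qed

lemma markov_io_joint_garbling:
  assumes mk: "markov (io_joint (\<lambda>x. pair_pmf (K12 x) (K3 x)) \<mu>) fst (\<lambda>e. fst (snd e)) (\<lambda>e. snd (snd e))"
    and x: "x \<in> set_pmf \<mu>"
  shows "K3 x = bind_pmf (K12 x) (cond_snd (bind_pmf \<mu> (\<lambda>x. pair_pmf (K12 x) (K3 x))))"
    (is "_ = bind_pmf _ (cond_snd ?R)")
proof (rule pmf_eqI)
  fix c
  have Q: "map_pmf fst ?R = bind_pmf \<mu> K12" by (simp add: map_bind_pmf map_fst_pair_pmf)
  have "pmf (cond_snd ?R b) c = pmf (K3 x) c" if b: "b \<in> set_pmf (K12 x)" for b
  proof -
    have "pmf \<mu> x \<noteq> 0" "pmf (K12 x) b \<noteq> 0" using x b by (simp_all add: set_pmf_iff)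
    hence "0 < pmf \<mu> x * pmf (K12 x) b" by (simp add: less_le)
    also have "\<dots> \<le> pmf (map_pmf fst ?R) b" unfolding Q by (rule pmf_mult_le_pmf_bind)
    finally have "0 < pmf (map_pmf fst ?R) b" .
    moreover have "pmf (K3 x) c * pmf (map_pmf fst ?R) b = pmf ?R (b, c)"
      unfolding Q using markov_io_joint_eq[OF mk, of x b c] \<open>pmf \<mu> x \<noteq> 0\<close> \<open>pmf (K12 x) b \<noteq> 0\<close>
      by (simp add: algebra_simps)
    ultimately show ?thesis by (simp add: pmf_cond_snd field_simps)
  qed
  hence "pmf (bind_pmf (K12 x) (cond_snd ?R)) c = (\<integral>b. pmf (K3 x) c \<partial>measure_pmf (K12 x))"
    unfolding pmf_bind by (intro integral_cong_AE) (auto simp: AE_measure_pmf_iff)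
  thus "pmf (K3 x) c = pmf (bind_pmf (K12 x) (cond_snd ?R)) c" by simp
qed

lemma mi_kernel_markov_le:
  assumes "markov (io_joint (\<lambda>x. pair_pmf (K12 x) (K3 x)) \<mu>) fst (\<lambda>e. fst (snd e)) (\<lambda>e. snd (snd e))"
  shows "mi_kernel \<mu> K3 \<le> mi_kernel \<mu> K12"
  using markov_io_joint_garbling[OF assms] by (rule mi_kernel_bind_le)

section \<open>Blocks of a process\<close>

definition seq_block :: "nat \<Rightarrow> nat \<Rightarrow> (nat \<Rightarrow> 'a) \<Rightarrow> 'a list" where
  "seq_block s n \<omega> = map (\<lambda>i. \<omega> (s + i)) [0..<n]"

lemma block_law_seq_block: "block_law P s n = distr P (count_space UNIV) (seq_block s n)"
  unfolding block_law_def seq_block_def ..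

lemma length_seq_block [simp]: "length (seq_block s n \<omega>) = n"
  by (simp add: seq_block_def)

lemma seq_block_eq_iff: "seq_block s n \<omega> = xs \<longleftrightarrow> length xs = n \<and> (\<forall>i<n. \<omega> (s + i) = xs ! i)"
  unfolding seq_block_def by (auto simp: list_eq_iff_nth_eq)

lemma measurable_seq_block:
  fixes P :: "(nat \<Rightarrow> 'a::finite) measure"
  assumes "is_process P"
  shows "seq_block s n \<in> measurable P (count_space UNIV)"
proof -
  let ?PM = "PiM UNIV (\<lambda>_. count_space (UNIV :: 'a set))"
  have "seq_block s n \<in> measurable ?PM (count_space UNIV)"
  proof (subst measurable_count_space_eq2_countable, intro conjI ballI)
    fix xs :: "'a list"
    show "seq_block s n -` {xs} \<inter> space ?PM \<in> sets ?PM"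
    proof (cases "length xs = n \<and> n \<noteq> 0")
      case True
      have "seq_block s n -` {xs} \<inter> space ?PM
          = space ?PM \<inter> (\<Inter>i\<in>{..<n}. (\<lambda>\<omega>. \<omega> (s + i)) -` {xs ! i} \<inter> space ?PM)"
        using True by (auto simp: seq_block_eq_iff)
      also have "\<dots> \<in> sets ?PM"
      proof -
        have "(\<lambda>\<omega>. \<omega> (s + i)) -` {xs ! i} \<inter> space ?PM \<in> sets ?PM" for i
          by (rule measurable_sets[OF measurable_component_singleton]) auto
        with True show ?thesis by (intro sets.Int sets.top sets.finite_INT) (auto simp: space_PiM)
      qed
      finally show ?thesis .
    next
      case False
      hence "seq_block s n -` {xs} \<inter> space ?PM = {} \<or> seq_block s n -` {xs} \<inter> space ?PM = space ?PM"
        by (auto simp: seq_block_eq_iff)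
      thus ?thesis by auto
    qed
  qed simp
  with assms show ?thesis unfolding is_process_def
    by (subst measurable_cong_sets[where M'="?PM" and N'="count_space UNIV"]) auto
qed

lemma measure_pmf_xpre:
  fixes P :: "(nat \<Rightarrow> 'a::finite) measure"
  assumes pp: "is_process P"
  shows "measure_pmf (xpre P n) = block_law P 0 n"
proof -
  interpret prob_space P using pp by (simp add: is_process_def)
  define D where "D = distr P (count_space UNIV) (seq_block 0 n)"
  have mg: "seq_block 0 n \<in> measurable P (count_space UNIV)" by (rule measurable_seq_block[OF pp])
  interpret D: prob_space D unfolding D_def by (rule prob_space_distr[OF mg])
  have "measure P {\<omega> \<in> space P. map \<omega> [0..<n] = xs} = measure D {xs}" for xs
  proof -
    have "measure D {xs} = measure P (seq_block 0 n -` {xs} \<inter> space P)"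
      unfolding D_def by (rule measure_distr[OF mg]) simp
    also have "seq_block 0 n -` {xs} \<inter> space P = {\<omega> \<in> space P. map \<omega> [0..<n] = xs}"
      by (auto simp: seq_block_def)
    finally show ?thesis by simp
  qed
  moreover have "(\<integral>\<^sup>+ xs. ennreal (measure D {xs}) \<partial>count_space UNIV) = 1"
  proof -
    have "(\<integral>\<^sup>+ xs. ennreal (measure D {xs}) \<partial>count_space UNIV)
        = (\<integral>\<^sup>+ xs. emeasure D {xs} \<partial>count_space UNIV)"
      by (simp add: D.emeasure_eq_measure)
    also have "\<dots> = emeasure D UNIV"
      by (rule emeasure_countable_singleton[symmetric]) (auto simp: D_def)
    also have "\<dots> = 1" using D.emeasure_space_1 by (simp add: D_def)
    finally show ?thesis .
  qed
  ultimately have pmf_xpre: "pmf (xpre P n) xs = measure D {xs}" for xs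
    unfolding xpre_def by (subst pmf_embed_pmf) auto
  moreover have "sets D = UNIV" by (simp add: D_def)
  ultimately have "measure_pmf (xpre P n) = D"
    by (intro measure_eqI_countable[where A=UNIV]) (auto simp: emeasure_pmf_single D.emeasure_eq_measure)
  thus ?thesis by (simp add: D_def block_law_seq_block)
qed

lemma blk_seq_block: "i \<le> j \<Longrightarrow> j \<le> n \<Longrightarrow> blk (seq_block 0 n \<omega>) (i, j) = seq_block i (j - i) \<omega>"
  unfolding blk_def seq_block_def by (simp add: drop_map take_map list_eq_iff_nth_eq)

lemma map_pmf_blk_xpre:
  fixes P :: "(nat \<Rightarrow> 'a::finite) measure"
  assumes pp: "is_process P" and "stationary P" and "i \<le> j" "j \<le> n"
  shows "map_pmf (\<lambda>x. blk x (i, j)) (xpre P n) = xpre P (j - i)"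
proof -
  have "measure_pmf (map_pmf (\<lambda>x. blk x (i, j)) (xpre P n))
      = distr P (count_space UNIV) (\<lambda>\<omega>. blk (seq_block 0 n \<omega>) (i, j))"
    unfolding map_pmf_rep_eq measure_pmf_xpre[OF pp] block_law_seq_block
    by (subst distr_distr) (auto simp: measurable_seq_block[OF pp] comp_def)
  also have "\<dots> = block_law P i (j - i)"
    using assms by (simp add: blk_seq_block block_law_seq_block)
  also have "\<dots> = measure_pmf (xpre P (j - i))"
    using assms by (simp add: stationary_def measure_pmf_xpre)
  finally show ?thesis using measure_pmf_inject by blast
qed

lemma set_pmf_xpre:
  fixes P :: "(nat \<Rightarrow> 'a::finite) measure"
  assumes pp: "is_process P"
  shows "set_pmf (xpre P n) \<subseteq> {xs. length xs = n}"
proof -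
  have "AE xs in measure_pmf (xpre P n). length xs = n"
    unfolding measure_pmf_xpre[OF pp] block_law_seq_block
    by (subst AE_distr_iff) (auto simp: measurable_seq_block[OF pp] seq_block_def)
  thus ?thesis by (auto simp: AE_measure_pmf_iff)
qed

lemma finite_set_pmf_xpre:
  fixes P :: "(nat \<Rightarrow> 'a::finite) measure"
  assumes "is_process P"
  shows "finite (set_pmf (xpre P n))"
  using finite_lists_length_eq[of "UNIV :: 'a set" n] set_pmf_xpre[OF assms]
  by (auto intro: finite_subset)

lemma markov_map_pmf: "markov (map_pmf h r) A B C = markov r (\<lambda>e. A (h e)) (\<lambda>e. B (h e)) (\<lambda>e. C (h e))"
  unfolding markov_def by (simp add: vimage_def)

lemma chan_joint_triple:
  "chan_joint K \<mu> [I, J, L] = map_pmf (\<lambda>(x, ((a, b), c)). (x, [a, b, c]))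
     (io_joint (\<lambda>x. pair_pmf (pair_pmf (K (blk x I)) (K (blk x J))) (K (blk x L))) \<mu>)"
  unfolding chan_joint_def io_joint_def
  by (simp add: map_bind_pmf map_pmf_comp case_prod_unfold pair_pmf_def map_pmf_def bind_assoc_pmf
      bind_return_pmf)

lemma mi_kernel_xpre_subadditive:
  fixes P :: "(nat \<Rightarrow> 'a::finite) measure" and Zs :: "'a list \<Rightarrow> 'c pmf"
  assumes pp: "is_process P" and st: "stationary P" and "m \<le> n"
    and mk: "markov (chan_joint Zs (xpre P n) [(0, m), (m, n), (0, n)])
          fst (\<lambda>(x, zs). (zs ! 0, zs ! 1)) (\<lambda>(x, zs). zs ! 2)"
  shows "mi_kernel (xpre P n) Zs \<le> mi_kernel (xpre P m) Zs + mi_kernel (xpre P (n - m)) Zs"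
proof -
  let ?K1 = "\<lambda>x. Zs (blk x (0, m))" and ?K2 = "\<lambda>x. Zs (blk x (m, n))"
  have "markov (io_joint (\<lambda>x. pair_pmf (pair_pmf (?K1 x) (?K2 x)) (Zs (blk x (0, n)))) (xpre P n))
      fst (\<lambda>e. fst (snd e)) (\<lambda>e. snd (snd e))"
    using mk unfolding chan_joint_triple markov_map_pmf by (simp add: case_prod_unfold)
  hence "mi_kernel (xpre P n) (\<lambda>x. Zs (blk x (0, n)))
      \<le> mi_kernel (xpre P n) (\<lambda>x. pair_pmf (?K1 x) (?K2 x))"
    by (rule mi_kernel_markov_le)
  also have "\<dots> \<le> mi_kernel (xpre P n) ?K1 + mi_kernel (xpre P n) ?K2"
    using pp by (intro mi_kernel_pair_le finite_set_pmf_xpre)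
  also have "mi_kernel (xpre P n) ?K1 + mi_kernel (xpre P n) ?K2
      = mi_kernel (xpre P m) Zs + mi_kernel (xpre P (n - m)) Zs"
    using map_pmf_blk_xpre[OF pp st, of 0 m n] map_pmf_blk_xpre[OF pp st, of m n n] \<open>m \<le> n\<close>
      mi_kernel_map[where K=Zs and f="\<lambda>x. blk x (0, m)"] mi_kernel_map[where K=Zs and f="\<lambda>x. blk x (m, n)"]
    by simp
  also have "mi_kernel (xpre P n) (\<lambda>x. Zs (blk x (0, n))) = mi_kernel (xpre P n) Zs"
    by (intro mi_kernel_cong) (use set_pmf_xpre[OF pp, of n] in \<open>auto simp: blk_def\<close>)
  finally show ?thesis .
qed

section \<open>Fekete's lemma\<close>

lemma subadditive_mult_le:
  fixes a :: "nat \<Rightarrow> real"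
  assumes sa: "\<And>m k. 1 \<le> m \<Longrightarrow> 1 \<le> k \<Longrightarrow> a (m + k) \<le> a m + a k" and "1 \<le> m" "1 \<le> r"
  shows "a (q * m + r) \<le> real q * a m + a r"
proof (induction q)
  case (Suc q)
  have "a (Suc q * m + r) = a (m + (q * m + r))" by (simp add: algebra_simps)
  also have "\<dots> \<le> a m + a (q * m + r)" using sa assms by simp
  also have "\<dots> \<le> a m + (real q * a m + a r)" using Suc by simp
  finally show ?case by (simp add: algebra_simps)
qed simp

lemma subadditive_quotient_le:
  fixes a :: "nat \<Rightarrow> real"
  assumes nonneg: "\<And>n. 1 \<le> n \<Longrightarrow> 0 \<le> a n"
    and sa: "\<And>m k. 1 \<le> m \<Longrightarrow> 1 \<le> k \<Longrightarrow> a (m + k) \<le> a m + a k"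
    and "1 \<le> m" "1 \<le> n"
  shows "a n / real n \<le> a m / real m + Max (a ` {1..m}) / real n"
proof -
  define q where "q = (n - 1) div m"
  define r where "r = (n - 1) mod m + 1"
  have n: "n = q * m + r" using assms by (simp add: q_def r_def)
  have r: "r \<in> {1..m}" using \<open>1 \<le> m\<close> by (simp add: r_def Suc_le_eq)
  have "a n \<le> real q * a m + a r" unfolding n using sa \<open>1 \<le> m\<close> r by (intro subadditive_mult_le) auto
  also have "a r \<le> Max (a ` {1..m})" using r by (intro Max_ge) auto
  also have "real q * a m \<le> real n * (a m / real m)"
  proof -
    have "real q * real m \<le> real n" unfolding n by simp
    hence "real q * real m * (a m / real m) \<le> real n * (a m / real m)"
      using nonneg[OF \<open>1 \<le> m\<close>] by (intro mult_right_mono) auto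
    thus ?thesis using \<open>1 \<le> m\<close> by simp
  qed
  finally have "a n \<le> real n * (a m / real m) + Max (a ` {1..m})" by simp
  thus ?thesis using \<open>1 \<le> n\<close> by (simp add: field_simps)
qed

lemma fekete:
  fixes a :: "nat \<Rightarrow> real"
  assumes nonneg: "\<And>n. 1 \<le> n \<Longrightarrow> 0 \<le> a n"
    and sa: "\<And>m k. 1 \<le> m \<Longrightarrow> 1 \<le> k \<Longrightarrow> a (m + k) \<le> a m + a k"
  shows "(\<lambda>n. a n / real n) \<longlonglongrightarrow> (INF n\<in>{1..}. a n / real n)"
proof -
  define L where "L = (INF n\<in>{1..}. a n / real n)"
  have bdd: "bdd_below ((\<lambda>n. a n / real n) ` {1..})"
    by (rule bdd_belowI[of _ 0]) (use nonneg in auto)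
  have L_le: "L \<le> a n / real n" if "1 \<le> n" for n
    unfolding L_def using bdd that by (intro cINF_lower) auto
  show ?thesis unfolding L_def[symmetric]
  proof (rule order_tendstoI)
    fix y assume "y < L"
    show "\<forall>\<^sub>F n in sequentially. y < a n / real n"
      using eventually_ge_at_top[of 1] by eventually_elim (use L_le \<open>y < L\<close> in force)
  next
    fix y assume "L < y"
    hence "L < L + (y - L) / 2" by simp
    hence "\<exists>m\<in>{1..}. a m / real m < L + (y - L) / 2"
      unfolding L_def using bdd by (subst (asm) cINF_less_iff) auto
    then obtain m where m: "1 \<le> m" "a m / real m < L + (y - L) / 2" by auto
    define C where "C = Max (a ` {1..m})"
    have "(\<lambda>n. C / real n) \<longlonglongrightarrow> 0" by (rule lim_const_over_n)
    hence "\<forall>\<^sub>F n in sequentially. C / real n < (y - L) / 2"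
      using \<open>L < y\<close> by (intro order_tendstoD(2)) auto
    with eventually_ge_at_top[of 1] show "\<forall>\<^sub>F n in sequentially. a n / real n < y"
    proof eventually_elim
      case (elim n)
      have "a n / real n \<le> a m / real m + C / real n"
        unfolding C_def using nonneg sa m(1) elim(1) by (rule subadditive_quotient_le)
      also have "\<dots> < L + (y - L) / 2 + (y - L) / 2"
        using m(2) elim(2) by (rule add_strict_mono)
      also have "\<dots> = y" by simp
      finally show ?case .
    qed
  qed
qed

section \<open>Admissible channels\<close>

lemma admissible_entropy_bound:
  assumes "admissible Z Zs"
  shows "\<exists>c. \<forall>P n. is_process P \<longrightarrow> 1 \<le> n
    \<longrightarrow> entropy_pmf (bind_pmf (xpre P n) Zs) \<le> ennreal (c * real n)"
  using assms[unfolded admissible_def, THEN conjunct1] by blast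

lemma admissible_info_rate_eq:
  assumes "admissible Z Zs" "is_process P"
  shows "info_rate Z P = info_rate Zs P"
  using assms(1)[unfolded admissible_def, THEN conjunct2, THEN conjunct1] assms(2) by blast

lemma admissible_markov:
  assumes "admissible Z Zs" "is_process P" "1 \<le> m" "m \<le> n"
  shows "markov (chan_joint Zs (xpre P n) [(0, m), (m, n), (0, n)])
      fst (\<lambda>(x, zs). (zs ! 0, zs ! 1)) (\<lambda>(x, zs). zs ! 2)"
  using assms(1)[unfolded admissible_def, THEN conjunct2, THEN conjunct2, THEN conjunct1] assms(2-)
  by blast

lemma admissible_mi_kernel_finite:
  fixes P :: "(nat \<Rightarrow> 'a::finite) measure"
  assumes "admissible Z Zs" "is_process P" "1 \<le> n"
  shows "mi_kernel (xpre P n) Zs \<noteq> \<top>"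
proof -
  from admissible_entropy_bound[OF assms(1)] obtain c where "\<forall>P n. is_process P \<longrightarrow> 1 \<le> n
      \<longrightarrow> entropy_pmf (bind_pmf (xpre P n) Zs) \<le> ennreal (c * real n)" ..
  with assms(2,3) have "mi_kernel (xpre P n) Zs \<le> ennreal (ln 2) * ennreal (c * real n) + 1"
    by (intro order.trans[OF mi_kernel_le_entropy] add_right_mono mult_left_mono) auto
  moreover have "ennreal (ln 2) * ennreal (c * real n) + 1 \<noteq> \<top>"
    by (simp add: ennreal_mult_eq_top_iff)
  ultimately show ?thesis by (rule neq_top_trans[rotated])
qed

lemma admissible_mi_n_eq:
  fixes P :: "(nat \<Rightarrow> 'a::finite) measure"
  assumes "admissible Z Zs" "is_process P" "1 \<le> n"
  shows "mi_n Zs P n = enn2real (mi_kernel (xpre P n) Zs) / ln 2"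
  unfolding mi_n_def using admissible_mi_kernel_finite[OF assms] by (rule mutual_info_pmf_io_joint)

lemma admissible_mi_n_subadditive:
  fixes P :: "(nat \<Rightarrow> 'a::finite) measure"
  assumes adm: "admissible Z Zs" and pp: "is_process P" and st: "stationary P"
    and "1 \<le> m" "1 \<le> k"
  shows "mi_n Zs P (m + k) \<le> mi_n Zs P m + mi_n Zs P k"
proof -
  have "markov (chan_joint Zs (xpre P (m + k)) [(0, m), (m, m + k), (0, m + k)])
      fst (\<lambda>(x, zs). (zs ! 0, zs ! 1)) (\<lambda>(x, zs). zs ! 2)"
    using adm pp \<open>1 \<le> m\<close> by (rule admissible_markov) simp
  hence "mi_kernel (xpre P (m + k)) Zs \<le> mi_kernel (xpre P m) Zs + mi_kernel (xpre P k) Zs"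
    using mi_kernel_xpre_subadditive[OF pp st, of m "m + k"] by simp
  moreover have "mi_kernel (xpre P m) Zs < \<top>" "mi_kernel (xpre P k) Zs < \<top>"
    using admissible_mi_kernel_finite[OF adm pp] assms by (simp_all add: top.not_eq_extremum)
  ultimately have "enn2real (mi_kernel (xpre P (m + k)) Zs)
      \<le> enn2real (mi_kernel (xpre P m) Zs) + enn2real (mi_kernel (xpre P k) Zs)"
    by (simp add: enn2real_mono flip: enn2real_plus)
  hence "enn2real (mi_kernel (xpre P (m + k)) Zs) / ln 2
      \<le> enn2real (mi_kernel (xpre P m) Zs) / ln 2 + enn2real (mi_kernel (xpre P k) Zs) / ln 2"
    unfolding add_divide_distrib[symmetric] by (rule divide_right_mono) simp
  thus ?thesis using admissible_mi_n_eq[OF adm pp] assms by simp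
qed

theorem lemma3p4:
  fixes Z :: "'a::finite list \<Rightarrow> 'b pmf"
    and Zs :: "'a list \<Rightarrow> 'c pmf"
    and P :: "(nat \<Rightarrow> 'a) measure"
  assumes "is_process P" and "stationary P" and "admissible Z Zs"
  shows "info_rate Z P = info_rate Zs P
       \<and> convergent (\<lambda>n. mi_n Zs P n / real n)
       \<and> info_rate Zs P = ereal (lim (\<lambda>n. mi_n Zs P n / real n))
       \<and> SCap Z = SCap Zs"
proof -
  let ?q = "\<lambda>n. mi_n Zs P n / real n"
  have "?q \<longlonglongrightarrow> (INF n\<in>{1..}. ?q n)"
    using assms by (intro fekete admissible_mi_n_subadditive) (auto simp: admissible_mi_n_eq)
  hence conv: "convergent ?q" and "?q \<longlonglongrightarrow> lim ?q"
    by (auto simp: convergent_def limI)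
  hence "info_rate Zs P = ereal (lim ?q)"
    unfolding info_rate_def by (intro lim_imp_Liminf tendsto_ereal) auto
  moreover have "SCap Z = SCap Zs"
    unfolding SCap_def using assms(3) by (intro SUP_cong) (auto simp: admissible_info_rate_eq)
  ultimately show ?thesis using conv admissible_info_rate_eq[OF assms(3,1)] by simp
qed

end
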